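(* Let $i\in\{1,2,3\}$ and let $v:(t_0,t_1)\times\mathbb T^3\to\mathbb R^3$, together with $L$, be a (sufficiently regular) solution of the system \[ \begin{aligned} \partial_t v^i&=-\frac{\alpha(1-3K)}{t}v^i - \frac{K}{1+K}t^{-\alpha}(1-|v|^2)\partial_i L-t^{-\alpha}v^j\partial_j v^i +t^{-\alpha}\Big(1-\frac{1-K}{1-K|v|^2}\Big)v^i\partial_j v^j\\ &\quad+t^{-\alpha}\frac{1-K}{1+K}\Big(1-\frac{1-K}{1-K|v|^2}\Big)v^i v^j\partial_j L +\frac{\alpha(1-3K)}{t}\frac{1-K}{1-K|v|^2}|v|^2 v^i,\\ \partial_tL&=-t^{-\alpha}\frac{1+K}{1-K|v|^2}\partial_j v^j-t^{-\alpha}\frac{1-K}{1-K|v|^2} v^j\partial_j L+\frac{\alpha(1+K)}{t}\frac{1-3K}{1-K|v|^2}|v|^2 . \end{aligned} \] Then the mean velocity $\overline v^i(t)=\int_{\mathbb T^3}v^i(t,x)\,d^3x$ satisfies \[ \partial_t\overline v^i=-\frac{\alpha(1-3K)}{t}\overline v^i+g^i(t), \] where \[ |g(t)|\leq C\frac{1+t^{1-\alpha}}{t}\, p\big(\overline v^j,\|D v\|_{H^1},\|D v\|_{L^{\infty}},\|D L\|_{L^2}\big) \] for a constant $C$ and a polynomial $p$ all of whose terms have degree at least two (i.e.\ vanishing zeroth and first order parts).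
   Context: Standing assumptions: $\alpha>0$ and $0\le K\le 1/3$ are constants, $t>1$, and $|v|<1/10$. $\mathbb T^3$ is the standard flat 3-torus, indices are raised/lowered with $\delta$, repeated indices summed, $|v|^2=\delta_{ij}v^iv^j$. $D$ denotes the spatial gradient and $\|f\|_{H^r}^2=\sum_{n=0}^r\int_{\mathbb T^3}|D^nf|^2$. The system is the relativistic Euler equations with $p=K\rho$ on the metric $-dt^2+t^{2\alpha}\delta$ written in variables $v^i=t^\alpha u^i/\sqrt{1+t^{2\alpha}|u|^2}$, $L=\log(t^{3\alpha(1+K)}\rho)$. *)

theory Defs
  imports "HOL-Analysis.Analysis"
begin

fun Ck_on :: "nat \<Rightarrow> 'a::euclidean_space set \<Rightarrow> ('a \<Rightarrow> real) \<Rightarrow> bool" where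
  "Ck_on 0 S f = continuous_on S f"
| "Ck_on (Suc k) S f =
     (continuous_on S f \<and> (\<forall>x\<in>S. f differentiable (at x)) \<and>
      (\<forall>b\<in>Basis. Ck_on k S (\<lambda>x. frechet_derivative f (at x) b)))"

text \<open>Spatial partial derivative d/dx^j on R^3 (the torus is realised as
  1-periodic functions on R^3).\<close>
definition pdx :: "3 \<Rightarrow> (real^3 \<Rightarrow> real) \<Rightarrow> real^3 \<Rightarrow> real" where
  "pdx j f x = frechet_derivative f (at x) (axis j 1)"

text \<open>Fundamental domain of the standard flat torus R^3/Z^3 (volume 1).\<close>
definition torus_cell :: "(real^3) set" where
  "torus_cell = cbox 0 One"

definition periodic3 :: "(real^3 \<Rightarrow> 'b) \<Rightarrow> bool" where
  "periodic3 f \<longleftrightarrow> (\<forall>x k. f (x + axis k 1) = f x)"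

definition euler_rhs_v ::
  "real \<Rightarrow> real \<Rightarrow> real \<Rightarrow> (real^3 \<Rightarrow> real^3) \<Rightarrow> (real^3 \<Rightarrow> real) \<Rightarrow> real^3 \<Rightarrow> 3 \<Rightarrow> real" where
  "euler_rhs_v \<alpha> K t w l x i =
     (let n2 = (norm (w x))\<^sup>2;
          Q = (1 - K) / (1 - K * n2);
          dv = (\<Sum>j\<in>UNIV. pdx j (\<lambda>y. w y $ j) x)
      in - (\<alpha> * (1 - 3*K) / t) * (w x $ i)
         - K / (1 + K) * t powr (-\<alpha>) * (1 - n2) * pdx i l x
         - t powr (-\<alpha>) * (\<Sum>j\<in>UNIV. w x $ j * pdx j (\<lambda>y. w y $ i) x)
         + t powr (-\<alpha>) * (1 - Q) * (w x $ i) * dv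
         + t powr (-\<alpha>) * ((1 - K) / (1 + K)) * (1 - Q) * (w x $ i)
             * (\<Sum>j\<in>UNIV. w x $ j * pdx j l x)
         + (\<alpha> * (1 - 3*K) / t) * Q * n2 * (w x $ i))"

definition euler_rhs_L ::
  "real \<Rightarrow> real \<Rightarrow> real \<Rightarrow> (real^3 \<Rightarrow> real^3) \<Rightarrow> (real^3 \<Rightarrow> real) \<Rightarrow> real^3 \<Rightarrow> real" where
  "euler_rhs_L \<alpha> K t w l x =
     (let n2 = (norm (w x))\<^sup>2;
          dv = (\<Sum>j\<in>UNIV. pdx j (\<lambda>y. w y $ j) x)
      in - ((t powr (-\<alpha>)) * ((1 + K) / (1 - K * n2)) * dv)
         - (t powr (-\<alpha>)) * ((1 - K) / (1 - K * n2)) * (\<Sum>j\<in>UNIV. w x $ j * pdx j l x)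
         + (\<alpha> * (1 + K) / t) * ((1 - 3*K) / (1 - K * n2)) * n2)"

text \<open>(v, L) is a (C^2, spatially 1-periodic) solution of the system on (t0,t1) x T^3,
  satisfying the standing assumption |v| < 1/10.\<close>
definition euler_solution ::
  "real \<Rightarrow> real \<Rightarrow> real \<Rightarrow> real \<Rightarrow> (real \<Rightarrow> real^3 \<Rightarrow> real^3) \<Rightarrow> (real \<Rightarrow> real^3 \<Rightarrow> real) \<Rightarrow> bool" where
  "euler_solution \<alpha> K t0 t1 v L \<longleftrightarrow>
     (\<forall>i. Ck_on 2 ({t0<..<t1} \<times> UNIV) (\<lambda>p. v (fst p) (snd p) $ i)) \<and>
     Ck_on 2 ({t0<..<t1} \<times> UNIV) (\<lambda>p. L (fst p) (snd p)) \<and>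
     (\<forall>t\<in>{t0<..<t1}. periodic3 (v t) \<and> periodic3 (L t)) \<and>
     (\<forall>t\<in>{t0<..<t1}. \<forall>x. norm (v t x) < 1/10) \<and>
     (\<forall>t\<in>{t0<..<t1}. \<forall>x. \<forall>i.
        vector_derivative (\<lambda>s. v s x $ i) (at t) = euler_rhs_v \<alpha> K t (v t) (L t) x i) \<and>
     (\<forall>t\<in>{t0<..<t1}. \<forall>x.
        vector_derivative (\<lambda>s. L s x) (at t) = euler_rhs_L \<alpha> K t (v t) (L t) x)"

text \<open>Mean over T^3 (volume 1).\<close>
definition mean3 :: "(real^3 \<Rightarrow> real^3) \<Rightarrow> real^3" where
  "mean3 w = integral torus_cell w"

definition Dv_sq :: "(real^3 \<Rightarrow> real^3) \<Rightarrow> real^3 \<Rightarrow> real" where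
  "Dv_sq w x = (\<Sum>i\<in>UNIV. \<Sum>j\<in>UNIV. (pdx j (\<lambda>y. w y $ i) x)\<^sup>2)"

definition D2v_sq :: "(real^3 \<Rightarrow> real^3) \<Rightarrow> real^3 \<Rightarrow> real" where
  "D2v_sq w x = (\<Sum>i\<in>UNIV. \<Sum>j\<in>UNIV. \<Sum>k\<in>UNIV.
                   (pdx k (pdx j (\<lambda>y. w y $ i)) x)\<^sup>2)"

definition Dv_H1 :: "(real^3 \<Rightarrow> real^3) \<Rightarrow> real" where
  "Dv_H1 w = sqrt (integral torus_cell (Dv_sq w) + integral torus_cell (D2v_sq w))"

definition Dv_Linf :: "(real^3 \<Rightarrow> real^3) \<Rightarrow> real" where
  "Dv_Linf w = (SUP x\<in>torus_cell. sqrt (Dv_sq w x))"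

definition DL_L2 :: "(real^3 \<Rightarrow> real) \<Rightarrow> real" where
  "DL_L2 l = sqrt (integral torus_cell (\<lambda>x. \<Sum>j\<in>UNIV. (pdx j l x)\<^sup>2))"

definition poly_deg_ge2 :: "nat \<Rightarrow> ((nat \<Rightarrow> real) \<Rightarrow> real) \<Rightarrow> bool" where
  "poly_deg_ge2 n p \<longleftrightarrow>
     (\<exists>(M :: (nat \<Rightarrow> nat) set) (c :: (nat \<Rightarrow> nat) \<Rightarrow> real).
        finite M \<and> (\<forall>m\<in>M. (\<forall>k\<ge>n. m k = 0) \<and> 2 \<le> (\<Sum>k<n. m k)) \<and>
        (\<forall>y. p y = (\<Sum>m\<in>M. c m * (\<Prod>k<n. y k ^ m k))))"

end

theory Submission
  imports Defs
begin

(* Averaging the velocity equation over the torus, the damping term gives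
  -alpha(1-3K)/t times the mean and the linear part of the pressure gradient
  integrates to zero by periodicity. Every remaining term is at least quadratic in
  (v, Dv, DL) with coefficient t^(-alpha) or 1/t. Pointwise it is bounded by AM-GM,
  using |v| <= 1 and |v| <= |mean v| + 9 ||Dv||_Linf (mean value theorem on the unit
  cell); integrating then turns |DL|^2 into ||DL||_L2^2. *)

section \<open>Slices and components of differentiable functions\<close>

lemma Ck_on_imp_continuous_on: "Ck_on k S f \<Longrightarrow> continuous_on S f"
  by (cases k) auto

lemma continuous_on_slice:
  assumes "continuous_on (U \<times> UNIV) F" and "t \<in> U"
  shows "continuous_on UNIV (\<lambda>y. F (t, y))"
  by (rule continuous_on_compose2[OF assms(1)]) (auto intro!: continuous_intros simp: assms(2))

lemma has_derivative_slice:
  assumes "F differentiable (at (t, x))"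
  shows "((\<lambda>y. F (t, y)) has_derivative (\<lambda>h. frechet_derivative F (at (t, x)) (0, h))) (at x)"
proof -
  have "((\<lambda>y. (t, y)) has_derivative (\<lambda>h. (0, h))) (at x)"
    by (auto intro!: derivative_eq_intros)
  from diff_chain_at[OF this assms[unfolded frechet_derivative_works]] show ?thesis
    by (simp add: o_def)
qed

lemma Ck_on_slice:
  fixes F :: "'a::euclidean_space \<times> 'b::euclidean_space \<Rightarrow> real"
  assumes "Ck_on k (U \<times> UNIV) F" and t: "t \<in> U"
  shows "Ck_on k UNIV (\<lambda>y. F (t, y))"
  using assms(1)
proof (induction k arbitrary: F)
  case 0
  then show ?case using continuous_on_slice t by simp
next
  case (Suc k)
  have diff: "F differentiable (at (t, y))" for y
    using Suc.prems t by simp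
  have partial: "(\<lambda>y. frechet_derivative (\<lambda>y. F (t, y)) (at y) b)
      = (\<lambda>y. frechet_derivative F (at (t, y)) (0, b))" for b
    using frechet_derivative_at[OF has_derivative_slice[OF diff]] by metis
  have "Ck_on k UNIV (\<lambda>y. frechet_derivative (\<lambda>y. F (t, y)) (at y) b)" if "b \<in> Basis" for b
    unfolding partial using that Suc.prems
    by (intro Suc.IH[of "\<lambda>p. frechet_derivative F (at p) (0, b)"]) (simp add: Basis_prod_def)
  moreover have "(\<lambda>y. F (t, y)) differentiable (at y)" for y
    using has_derivative_slice[OF diff] by (rule differentiableI)
  moreover have "continuous_on UNIV (\<lambda>y. F (t, y))"
    using Suc.prems t by (intro continuous_on_slice) simp_all
  ultimately show ?case by simp
qed

lemma has_field_derivative_first_slice: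
  fixes F :: "real \<times> 'b::real_normed_vector \<Rightarrow> real"
  assumes "F differentiable (at (s, x))"
  shows "((\<lambda>s. F (s, x)) has_field_derivative frechet_derivative F (at (s, x)) (1, 0)) (at s)"
proof (rule has_derivative_imp_has_field_derivative)
  have "((\<lambda>s. (s, x)) has_derivative (\<lambda>h. (h, 0))) (at s)"
    by (auto intro!: derivative_eq_intros)
  from diff_chain_at[OF this assms[unfolded frechet_derivative_works]]
  show "((\<lambda>s. F (s, x)) has_derivative (\<lambda>h. frechet_derivative F (at (s, x)) (h, 0))) (at s)"
    by (simp add: o_def)
  have "linear (frechet_derivative F (at (s, x)))"
    using assms frechet_derivative_works has_derivative_linear by blast
  then show "h * frechet_derivative F (at (s, x)) (1, 0) = frechet_derivative F (at (s, x)) (h, 0)" for h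
    using linear_scale[of "frechet_derivative F (at (s, x))" h "(1, 0)"] by simp
qed

lemma Ck_on_Suc_UNIV_has_derivative:
  "Ck_on (Suc k) UNIV f \<Longrightarrow> (f has_derivative frechet_derivative f (at x)) (at x)"
  by (simp add: frechet_derivative_works)

lemma Ck_on_Suc_UNIV_continuous_pdx:
  "Ck_on (Suc k) UNIV f \<Longrightarrow> continuous_on UNIV (pdx j f)"
  unfolding pdx_def[abs_def] by (auto intro: Ck_on_imp_continuous_on)

lemma has_derivative_eq_sum_pdx:
  fixes f :: "real^3 \<Rightarrow> real"
  assumes "(f has_derivative f') (at x)"
  shows "f' h = (\<Sum>j\<in>UNIV. h $ j * pdx j f x)"
proof -
  have lin: "linear f'" using has_derivative_linear[OF assms] .
  have "f' h = f' (\<Sum>j\<in>UNIV. h $ j *\<^sub>R axis j 1)"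
    using basis_expansion[of h] by (simp add: scalar_mult_eq_scaleR)
  also have "\<dots> = (\<Sum>j\<in>UNIV. h $ j * f' (axis j 1))"
    by (simp add: linear_sum[OF lin] linear_scale[OF lin])
  finally show ?thesis by (simp add: pdx_def frechet_derivative_at[OF assms, symmetric])
qed

lemma has_vector_derivative_componentwise_cart:
  fixes f :: "real \<Rightarrow> real^'n"
  assumes "\<And>i. ((\<lambda>s. f s $ i) has_field_derivative f' $ i) (at t)"
  shows "(f has_vector_derivative f') (at t)"
  unfolding has_vector_derivative_def
proof (rule has_derivative_componentwise_within[THEN iffD2], intro ballI)
  fix b :: "real^'n"
  assume "b \<in> Basis"
  then obtain i where b: "b = axis i 1" unfolding Basis_vec_def by auto
  have "(\<lambda>h. h * f' $ i) = (*) (f' $ i)" by (auto simp: mult.commute)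
  with assms[of i] show "((\<lambda>s. f s \<bullet> b) has_derivative (\<lambda>h. (h *\<^sub>R f') \<bullet> b)) (at t)"
    unfolding b inner_axis by (simp add: has_field_derivative_def)
qed

section \<open>Integrals over the unit cell of the torus\<close>

lemma mem_torus_cell: "x \<in> torus_cell \<longleftrightarrow> (\<forall>j. 0 \<le> x $ j \<and> x $ j \<le> 1)"
proof -
  have "(One::real^3) $ j = 1" for j
    by (metis Cart_1 one_index)
  then show ?thesis by (simp add: torus_cell_def mem_box_cart)
qed

lemma integrable_on_torus_cell:
  fixes f :: "real^3 \<Rightarrow> 'b::banach"
  shows "continuous_on UNIV f \<Longrightarrow> f integrable_on torus_cell"
  unfolding torus_cell_def by (rule integrable_continuous) (rule continuous_on_subset, auto)

lemma has_integral_torus_cell_const: "((\<lambda>x. c) has_integral c) torus_cell"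
  using has_integral_const[of c "0::real^3" One] by (simp add: torus_cell_def)

lemma integral_cbox_translate:
  fixes f :: "'a::euclidean_space \<Rightarrow> 'b::real_normed_vector"
  shows "integral (cbox (a + c) (b + c)) f = integral (cbox a b) (\<lambda>x. f (c + x))"
proof (cases "f integrable_on cbox (a + c) (b + c)")
  case True
  then have "((\<lambda>x. f (c + x)) has_integral integral (cbox (a + c) (b + c)) f) (cbox a b)"
    using has_integral_shift_cbox_iff[of f c _ a b] by (simp add: o_def integrable_integral)
  then show ?thesis by (rule integral_unique[symmetric])
next
  case False
  then have "\<not> (\<lambda>x. f (c + x)) integrable_on cbox a b"
    using has_integral_shift_cbox_iff[of f c _ a b] by (auto simp: o_def integrable_on_def)
  with False show ?thesis by (simp add: not_integrable_integral)
qed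

lemma mem_cbox_cart_split_axis:
  fixes a b x :: "real^'n"
  shows "x \<in> cbox a b \<longleftrightarrow>
    a $ i \<le> x $ i \<and> x $ i \<le> b $ i \<and> (\<forall>j. j \<noteq> i \<longrightarrow> a $ j \<le> x $ j \<and> x $ j \<le> b $ j)"
  unfolding mem_box_cart by metis

lemma integral_torus_cell_translate:
  fixes l :: "real^3 \<Rightarrow> 'b::banach"
  assumes cont: "continuous_on UNIV l" and per: "periodic3 l" and h: "0 \<le> h" "h \<le> 1"
  shows "integral torus_cell (\<lambda>x. l (x + h *\<^sub>R axis i 1)) = integral torus_cell l"
proof -
  define e :: "real^3" where "e = axis i 1"
  define c :: "real^3" where "c = (\<chi> j. if j = i then h else 1)"
  have eB: "e \<in> Basis" by (simp add: e_def)
  have "(One::real^3) $ j = 1" for j by (metis Cart_1 one_index)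
  then have one: "(\<Sum>b\<in>Basis. (b::real^3) $ j) = 1" for j by simp
  have eij: "e $ j = (if j = i then 1 else 0)" for j by (simp add: e_def axis_def)
  have ie: "x \<bullet> e = x $ i" for x by (simp add: e_def inner_axis)
  note mem = mem_cbox_cart_split_axis[where i = i]
  have intl: "l integrable_on cbox a b" for a b
    using integrable_continuous[OF continuous_on_subset[OF cont]] by auto
  \<comment> \<open>Cut the translated cell at x_i = 1 and move the overhanging slab back by periodicity.\<close>
  have "integral torus_cell (\<lambda>x. l (x + h *\<^sub>R e)) = integral (cbox 0 One) (\<lambda>x. l (h *\<^sub>R e + x))"
    by (simp add: torus_cell_def add.commute)
  also have "\<dots> = integral (cbox (0 + h *\<^sub>R e) (One + h *\<^sub>R e)) l"
    by (rule integral_cbox_translate[symmetric])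
  also have "\<dots> = integral (cbox (0 + h *\<^sub>R e) (One + h *\<^sub>R e) \<inter> {x. x \<bullet> e \<le> 1}) l
      + integral (cbox (0 + h *\<^sub>R e) (One + h *\<^sub>R e) \<inter> {x. x \<bullet> e \<ge> 1}) l"
    by (rule integral_split[OF intl eB])
  also have "cbox (0 + h *\<^sub>R e) (One + h *\<^sub>R e) \<inter> {x. x \<bullet> e \<le> 1} = torus_cell \<inter> {x. x \<bullet> e \<ge> h}"
    using h by (auto simp: set_eq_iff torus_cell_def mem one eij ie)
  also have "cbox (0 + h *\<^sub>R e) (One + h *\<^sub>R e) \<inter> {x. x \<bullet> e \<ge> 1} = cbox (0 + e) (c + e)"
    using h by (auto simp: set_eq_iff mem one eij ie c_def)
  also have "integral (cbox (0 + e) (c + e)) l = integral (cbox 0 c) (\<lambda>x. l (e + x))"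
    by (rule integral_cbox_translate)
  also have "\<dots> = integral (cbox 0 c) l"
    using per by (simp add: periodic3_def e_def add.commute)
  also have "cbox 0 c = torus_cell \<inter> {x. x \<bullet> e \<le> h}"
    using h by (auto simp: set_eq_iff torus_cell_def mem one eij ie c_def)
  finally have "integral torus_cell (\<lambda>x. l (x + h *\<^sub>R e)) = integral torus_cell l"
    using integral_split[OF intl eB, of 0 One h] by (simp add: torus_cell_def)
  then show ?thesis by (simp add: e_def)
qed

lemma has_field_derivative_along_axis:
  assumes l: "Ck_on (Suc k) UNIV l"
  shows "((\<lambda>h. l (x + h *\<^sub>R axis i 1)) has_field_derivative pdx i l (x + h *\<^sub>R axis i 1)) (at h)"
proof (rule has_derivative_imp_has_field_derivative)
  have "((\<lambda>h. x + h *\<^sub>R axis i 1) has_derivative (\<lambda>k. k *\<^sub>R axis i 1)) (at h)"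
    by (auto intro!: derivative_eq_intros)
  from diff_chain_at[OF this Ck_on_Suc_UNIV_has_derivative[OF l]]
  show "((\<lambda>h. l (x + h *\<^sub>R axis i 1)) has_derivative
      (\<lambda>k. frechet_derivative l (at (x + h *\<^sub>R axis i 1)) (k *\<^sub>R axis i 1))) (at h)"
    by (simp add: o_def)
  show "k * pdx i l (x + h *\<^sub>R axis i 1) = frechet_derivative l (at (x + h *\<^sub>R axis i 1)) (k *\<^sub>R axis i 1)"
    for k
    using has_derivative_linear[OF Ck_on_Suc_UNIV_has_derivative[OF l]]
    by (simp add: linear_scale pdx_def)
qed

lemma integral_torus_cell_pdx_periodic:
  assumes l: "Ck_on (Suc k) UNIV l" and per: "periodic3 l"
  shows "integral torus_cell (pdx i l) = 0"
proof -
  define e :: "real^3" where "e = axis i 1"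
  define \<phi> where "\<phi> h = integral torus_cell (\<lambda>x. l (x + h *\<^sub>R e))" for h
  have cont: "continuous_on UNIV l"
    using l by (rule Ck_on_imp_continuous_on)
  have \<phi>_const: "\<phi> h = integral torus_cell l" if "\<bar>h\<bar> < 1" for h
  proof (cases "h < 0")
    case True
    have "l (x + h *\<^sub>R e) = l (x + (h + 1) *\<^sub>R e)" for x
      using per[unfolded periodic3_def, rule_format, of "x + h *\<^sub>R e" i]
      by (simp add: e_def algebra_simps)
    then have "\<phi> h = \<phi> (h + 1)" by (simp add: \<phi>_def)
    then show ?thesis
      using integral_torus_cell_translate[OF cont per, of "h + 1"] True that by (simp add: \<phi>_def e_def)
  next
    case False
    then show ?thesis
      using integral_torus_cell_translate[OF cont per, of h] that by (simp add: \<phi>_def e_def)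
  qed
  have "(\<phi> has_field_derivative integral torus_cell (\<lambda>x. pdx i l (x + 0 *\<^sub>R e))) (at 0 within UNIV)"
    unfolding \<phi>_def torus_cell_def
  proof (rule leibniz_rule_field_derivative[where fx = "\<lambda>h x. pdx i l (x + h *\<^sub>R e)"])
    show "((\<lambda>h. l (x + h *\<^sub>R e)) has_field_derivative pdx i l (x + h *\<^sub>R e)) (at h within UNIV)" for x h
      unfolding e_def by (rule has_field_derivative_along_axis[OF l])
    show "(\<lambda>x. l (x + h *\<^sub>R e)) integrable_on cbox 0 One" for h
      by (rule integrable_continuous) (auto intro!: continuous_on_compose2[OF cont] continuous_intros)
    show "continuous_on (UNIV \<times> cbox 0 One) (\<lambda>(h, x). pdx i l (x + h *\<^sub>R e))"
      by (auto intro!: continuous_on_compose2[OF Ck_on_Suc_UNIV_continuous_pdx[OF l]] continuous_intros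
          simp: split_beta)
  qed auto
  then have "(\<phi> has_field_derivative integral torus_cell (pdx i l)) (at 0)"
    by simp
  then show ?thesis
    by (rule DERIV_local_const[of _ _ _ 1]) (use \<phi>_const in auto)
qed

lemma abs_frechet_derivative_le_pdx_bound:
  fixes f :: "real^3 \<Rightarrow> real"
  assumes der: "(f has_derivative f') (at z)" and bnd: "\<And>j. \<bar>pdx j f z\<bar> \<le> D"
  shows "\<bar>f' h\<bar> \<le> 3 * D * norm h"
proof -
  have "\<bar>f' h\<bar> \<le> (\<Sum>j\<in>UNIV. \<bar>h $ j * pdx j f z\<bar>)"
    unfolding has_derivative_eq_sum_pdx[OF der] by (rule sum_abs)
  also have "\<dots> \<le> (\<Sum>j\<in>(UNIV::3 set). norm h * D)"
    using bnd by (intro sum_mono) (simp add: abs_mult mult_mono component_le_norm_cart)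
  finally show ?thesis by (simp add: algebra_simps)
qed

lemma norm_diff_torus_cell_le: "x \<in> torus_cell \<Longrightarrow> y \<in> torus_cell \<Longrightarrow> norm (x - y) \<le> 3"
proof -
  assume "x \<in> torus_cell" "y \<in> torus_cell"
  then have bounds: "0 \<le> x $ j" "x $ j \<le> 1" "0 \<le> y $ j" "y $ j \<le> 1" for j
    by (auto simp: mem_torus_cell)
  have "\<bar>(x - y) $ j\<bar> \<le> 1" for j
    using bounds[of j] by (auto simp: abs_le_iff)
  then have "(\<Sum>j\<in>UNIV. \<bar>(x - y) $ j\<bar>) \<le> (\<Sum>j\<in>(UNIV::3 set). 1)"
    by (intro sum_mono)
  with norm_le_l1_cart[of "x - y"] show ?thesis by simp
qed

lemma abs_sub_integral_torus_cell_le: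
  assumes f: "Ck_on (Suc k) UNIV f" and bnd: "\<And>y j. y \<in> torus_cell \<Longrightarrow> \<bar>pdx j f y\<bar> \<le> D"
    and x: "x \<in> torus_cell"
  shows "\<bar>f x - integral torus_cell f\<bar> \<le> 9 * D"
proof -
  have D: "0 \<le> D" using bnd[OF x, of 1] by simp
  have lipschitz: "\<bar>f x - f y\<bar> \<le> 9 * D" if y: "y \<in> torus_cell" for y
  proof -
    have "norm (f x - f y) \<le> 3 * D * norm (x - y)"
    proof (rule differentiable_bound[where f' = "\<lambda>z. frechet_derivative f (at z)"])
      show "convex torus_cell" by (simp add: torus_cell_def)
      show "(f has_derivative frechet_derivative f (at z)) (at z within torus_cell)" for z
        using Ck_on_Suc_UNIV_has_derivative[OF f] has_derivative_at_withinI by blast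
      show "onorm (frechet_derivative f (at z)) \<le> 3 * D" if "z \<in> torus_cell" for z
        using abs_frechet_derivative_le_pdx_bound[OF Ck_on_Suc_UNIV_has_derivative[OF f] bnd[OF that]]
        by (intro onorm_le) simp
    qed (use x y in auto)
    also have "\<dots> \<le> 3 * D * 3"
      using norm_diff_torus_cell_le[OF x y] D by (intro mult_left_mono) auto
    finally show ?thesis by simp
  qed
  have intf: "f integrable_on torus_cell"
    using Ck_on_imp_continuous_on[OF f] by (rule integrable_on_torus_cell)
  have "f x - integral torus_cell f = integral torus_cell (\<lambda>y. f x - f y)"
    using integral_diff[OF integrable_const intf[unfolded torus_cell_def], of "f x"]
    by (simp add: torus_cell_def)
  also have "\<bar>\<dots>\<bar> \<le> 9 * D"
    using has_integral_bound[OF _ integrable_integral, of "9 * D" "\<lambda>y. f x - f y" 0 One] D lipschitz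
      integrable_diff[OF integrable_const intf[unfolded torus_cell_def]]
    by (simp add: torus_cell_def)
  finally show ?thesis .
qed

lemma mean3_component:
  assumes "\<And>i. continuous_on UNIV (\<lambda>x. w x $ i)"
  shows "mean3 w $ i = integral torus_cell (\<lambda>x. w x $ i)"
proof -
  have "continuous_on UNIV w"
    using continuous_on_vec_lambda[of UNIV "\<lambda>i x. w x $ i"] assms by simp
  then show ?thesis by (simp add: mean3_def integrable_on_torus_cell)
qed

lemma abs_pdx_le_Dv_Linf:
  assumes w: "\<And>i. Ck_on (Suc k) UNIV (\<lambda>y. w y $ i)" and x: "x \<in> torus_cell"
  shows "\<bar>pdx j (\<lambda>y. w y $ i) x\<bar> \<le> Dv_Linf w"
proof -
  have "continuous_on UNIV (Dv_sq w)"
    unfolding Dv_sq_def[abs_def] using Ck_on_Suc_UNIV_continuous_pdx[OF w]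
    by (intro continuous_intros)
  then have "compact ((\<lambda>x. sqrt (Dv_sq w x)) ` torus_cell)"
    by (intro compact_continuous_image continuous_intros)
      (auto simp: torus_cell_def intro: continuous_on_subset)
  then have bdd: "bdd_above ((\<lambda>x. sqrt (Dv_sq w x)) ` torus_cell)"
    by (intro bounded_imp_bdd_above compact_imp_bounded)
  have "(pdx j (\<lambda>y. w y $ i) x)^2 \<le> (\<Sum>j\<in>UNIV. (pdx j (\<lambda>y. w y $ i) x)^2)"
    by (rule member_le_sum) auto
  also have "\<dots> \<le> Dv_sq w x"
    unfolding Dv_sq_def by (rule member_le_sum) (auto intro: sum_nonneg)
  finally have "\<bar>pdx j (\<lambda>y. w y $ i) x\<bar> \<le> sqrt (Dv_sq w x)"
    using real_sqrt_le_mono by fastforce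
  also have "\<dots> \<le> Dv_Linf w"
    unfolding Dv_Linf_def by (rule cSUP_upper[OF x bdd])
  finally show ?thesis .
qed

lemma DL_L2_sq:
  assumes "Ck_on (Suc k) UNIV l"
  shows "(DL_L2 l)^2 = integral torus_cell (\<lambda>x. \<Sum>j\<in>UNIV. (pdx j l x)^2)"
proof -
  have "(\<lambda>x. \<Sum>j\<in>UNIV. (pdx j l x)^2) integrable_on torus_cell"
    using Ck_on_Suc_UNIV_continuous_pdx[OF assms]
    by (intro integrable_on_torus_cell continuous_intros)
  then have "0 \<le> integral torus_cell (\<lambda>x. \<Sum>j\<in>UNIV. (pdx j l x)^2)"
    by (rule integral_nonneg) (simp add: sum_nonneg)
  then show ?thesis by (simp add: DL_L2_def)
qed

lemma power2_norm_vec: "(norm (x :: real^'n))^2 = (\<Sum>i\<in>UNIV. (x $ i)^2)"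
  by (simp add: norm_vec_def L2_set_def sum_nonneg)

definition velocity_sq_bound :: "(real^3 \<Rightarrow> real^3) \<Rightarrow> real" where
  "velocity_sq_bound w = 2 * (norm (mean3 w))^2 + 486 * (Dv_Linf w)^2"

lemma norm_sq_le_velocity_sq_bound:
  assumes w: "\<And>i. Ck_on (Suc k) UNIV (\<lambda>y. w y $ i)" and x: "x \<in> torus_cell"
  shows "(norm (w x))^2 \<le> velocity_sq_bound w"
proof -
  have component: "(w x $ j)^2 \<le> 2 * (mean3 w $ j)^2 + 162 * (Dv_Linf w)^2" for j
  proof -
    have "\<bar>w x $ j - mean3 w $ j\<bar> \<le> 9 * Dv_Linf w"
      using abs_sub_integral_torus_cell_le[OF w abs_pdx_le_Dv_Linf[OF w] x]
        mean3_component[OF Ck_on_imp_continuous_on[OF w]] by simp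
    then have "(w x $ j - mean3 w $ j)^2 \<le> (9 * Dv_Linf w)^2"
      using power_mono[OF _ abs_ge_zero, of _ _ 2] by fastforce
    \<comment> \<open>a^2 = 2 b^2 + 2 (a - b)^2 - (a - 2 b)^2\<close>
    moreover have "0 \<le> (w x $ j - 2 * mean3 w $ j)^2" by simp
    ultimately show ?thesis by (simp add: power2_eq_square algebra_simps)
  qed
  have "(norm (w x))^2 \<le> (\<Sum>j\<in>(UNIV::3 set). 2 * (mean3 w $ j)^2 + 162 * (Dv_Linf w)^2)"
    unfolding power2_norm_vec by (intro sum_mono component)
  then show ?thesis
    by (simp add: velocity_sq_bound_def power2_norm_vec sum.distrib sum_distrib_left)
qed

section \<open>Polynomials without constant and linear part\<close>

lemma poly_deg_ge2_add:
  assumes "poly_deg_ge2 n p" and "poly_deg_ge2 n q"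
  shows "poly_deg_ge2 n (\<lambda>y. p y + q y)"
proof -
  obtain M1 c1 where 1: "finite M1" "\<forall>m\<in>M1. (\<forall>k\<ge>n. m k = 0) \<and> 2 \<le> (\<Sum>k<n. m k)"
    "\<forall>y. p y = (\<Sum>m\<in>M1. c1 m * (\<Prod>k<n. y k ^ m k))"
    using assms(1) unfolding poly_deg_ge2_def by blast
  obtain M2 c2 where 2: "finite M2" "\<forall>m\<in>M2. (\<forall>k\<ge>n. m k = 0) \<and> 2 \<le> (\<Sum>k<n. m k)"
    "\<forall>y. q y = (\<Sum>m\<in>M2. c2 m * (\<Prod>k<n. y k ^ m k))"
    using assms(2) unfolding poly_deg_ge2_def by blast
  define c where "c m = (if m \<in> M1 then c1 m else 0) + (if m \<in> M2 then c2 m else 0)" for m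
  have "p y + q y = (\<Sum>m\<in>M1 \<union> M2. c m * (\<Prod>k<n. y k ^ m k))" for y
  proof -
    have "(\<Sum>m\<in>M1 \<union> M2. c m * (\<Prod>k<n. y k ^ m k)) =
        (\<Sum>m\<in>M1 \<union> M2. if m \<in> M1 then c1 m * (\<Prod>k<n. y k ^ m k) else 0) +
        (\<Sum>m\<in>M1 \<union> M2. if m \<in> M2 then c2 m * (\<Prod>k<n. y k ^ m k) else 0)"
      unfolding sum.distrib[symmetric] by (rule sum.cong) (auto simp: c_def algebra_simps)
    also have "\<dots> = (\<Sum>m\<in>M1. c1 m * (\<Prod>k<n. y k ^ m k)) + (\<Sum>m\<in>M2. c2 m * (\<Prod>k<n. y k ^ m k))"
      using 1(1) 2(1) by (intro arg_cong2[where f="(+)"] sum.mono_neutral_cong_right) auto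
    finally show ?thesis using 1(3) 2(3) by simp
  qed
  then show ?thesis unfolding poly_deg_ge2_def
    using 1 2 by (intro exI[of _ "M1 \<union> M2"] exI[of _ c]) auto
qed

lemma poly_deg_ge2_monomial:
  assumes "\<forall>k\<ge>n. m k = 0" and "2 \<le> (\<Sum>k<n. m k)"
  shows "poly_deg_ge2 n (\<lambda>y. c * (\<Prod>k<n. y k ^ m k))"
  unfolding poly_deg_ge2_def using assms
  by (intro exI[of _ "{m}"] exI[of _ "\<lambda>_. c"]) auto

lemma poly_deg_ge2_scaled_square:
  assumes "a < n"
  shows "poly_deg_ge2 n (\<lambda>y. c * (y a)^2)"
proof -
  define m where "m k = (if k = a then 2 else (0::nat))" for k
  have "(\<Prod>k<n. y k ^ m k) = (\<Prod>k<n. if k = a then y k ^ 2 else 1)" for y :: "nat \<Rightarrow> real"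
    by (rule prod.cong) (auto simp: m_def)
  also have "\<dots> y = (y a)^2" for y using assms by (simp add: prod.delta)
  finally have "(\<lambda>y. c * (y a)^2) = (\<lambda>y. c * (\<Prod>k<n. y k ^ m k))" by simp
  moreover have "(\<Sum>k<n. m k) = 2" using assms by (simp add: m_def sum.delta)
  ultimately show ?thesis using assms by (auto intro!: poly_deg_ge2_monomial simp: m_def)
qed

lemma poly_deg_ge2_scaled_square_mult_square:
  assumes "a < n" and "b < n"
  shows "poly_deg_ge2 n (\<lambda>y. c * ((y a)^2 * (y b)^2))"
proof -
  define m where "m k = (if k = a then 2 else (0::nat)) + (if k = b then 2 else 0)" for k
  have "(\<Prod>k<n. y k ^ m k) = (\<Prod>k<n. (if k = a then y k ^ 2 else 1) * (if k = b then y k ^ 2 else 1))"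
    for y :: "nat \<Rightarrow> real"
    by (rule prod.cong) (auto simp: m_def power_add)
  also have "\<dots> y = (y a)^2 * (y b)^2" for y using assms by (simp add: prod.distrib prod.delta)
  finally have "(\<lambda>y. c * ((y a)^2 * (y b)^2)) = (\<lambda>y. c * (\<Prod>k<n. y k ^ m k))" by simp
  moreover have "(\<Sum>k<n. m k) = 4" using assms by (simp add: m_def sum.distrib sum.delta)
  ultimately show ?thesis using assms by (auto intro!: poly_deg_ge2_monomial simp: m_def)
qed

(* R is velocity_sq_bound in the variables y. *)
definition mean_velocity_poly :: "real \<Rightarrow> (nat \<Rightarrow> real) \<Rightarrow> real" where
  "mean_velocity_poly a y =
     (let R = 2 * ((y 0)^2 + (y 1)^2 + (y 2)^2) + 486 * (y 4)^2
      in (5 + a) * R + 2 * R * (y 5)^2 + 3 * (y 4)^2)"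

lemma poly_deg_ge2_mean_velocity_poly: "poly_deg_ge2 6 (mean_velocity_poly a)"
proof -
  have "poly_deg_ge2 6 (\<lambda>y.
      ((2 * (5 + a)) * (y 0)^2 + (2 * (5 + a)) * (y 1)^2)
    + ((2 * (5 + a)) * (y 2)^2 + (486 * (5 + a) + 3) * (y 4)^2)
    + ((4 * ((y 0)^2 * (y 5)^2) + 4 * ((y 1)^2 * (y 5)^2))
    + (4 * ((y 2)^2 * (y 5)^2) + 972 * ((y 4)^2 * (y 5)^2))))" (is "poly_deg_ge2 6 ?expanded")
    by (intro poly_deg_ge2_add poly_deg_ge2_scaled_square poly_deg_ge2_scaled_square_mult_square) auto
  moreover have "?expanded = mean_velocity_poly a"
    by (rule ext) (simp add: mean_velocity_poly_def Let_def algebra_simps)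
  ultimately show ?thesis by simp
qed

section \<open>Pointwise bound on the nonlinear terms\<close>

lemma euler_pressure_factor_bounds:
  fixes K n2 :: real
  assumes "0 \<le> K" "K \<le> 1/3" "0 \<le> n2" "n2 \<le> 1"
  shows "0 \<le> (1 - K) / (1 - K * n2)" and "(1 - K) / (1 - K * n2) \<le> 1"
proof -
  have "K * n2 \<le> K" using assms by (simp add: mult_left_le)
  then have "0 < 1 - K * n2" "1 - K \<le> 1 - K * n2" using assms by auto
  then show "0 \<le> (1 - K) / (1 - K * n2)" "(1 - K) / (1 - K * n2) \<le> 1"
    using assms by auto
qed

lemma abs_mult_le_half_sum_squares: "\<bar>x * y\<bar> \<le> (x^2 + y^2) / 2" for x y :: real
  using sum_squares_bound[of "\<bar>x\<bar>" "\<bar>y\<bar>"] by (simp add: abs_mult)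

lemma abs_sum_UNIV_le:
  fixes f :: "'n::finite \<Rightarrow> real"
  assumes "\<And>j. \<bar>f j\<bar> \<le> B"
  shows "\<bar>\<Sum>j\<in>UNIV. f j\<bar> \<le> real CARD('n) * B"
  using order_trans[OF sum_abs sum_bounded_above[of UNIV "\<lambda>j. \<bar>f j\<bar>" B]] assms by simp

lemma abs_mult_le_of_abs_le_1: "\<bar>c\<bar> \<le> 1 \<Longrightarrow> \<bar>c * x\<bar> \<le> \<bar>x\<bar>" for c x :: real
  by (simp add: abs_mult mult_left_le_one_le)

lemma abs_velocity_gradient_terms_le:
  fixes u :: "3 \<Rightarrow> real" and A :: "3 \<Rightarrow> 3 \<Rightarrow> real"
  assumes u: "\<And>j. (u j)^2 \<le> R" and A: "\<And>i j. \<bar>A i j\<bar> \<le> D" and q: "\<bar>q\<bar> \<le> 1"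
  shows "\<bar>q * u i * (\<Sum>j\<in>UNIV. A j j) - (\<Sum>j\<in>UNIV. u j * A i j)\<bar> \<le> 3 * R + 3 * D^2"
proof -
  have A2: "(A i j)^2 \<le> D^2" for i j
    using power_mono[OF A[of i j] abs_ge_zero, of 2] by simp
  have uA: "\<bar>u j * A k j'\<bar> \<le> (R + D^2) / 2" for j k j'
    using abs_mult_le_half_sum_squares[of "u j" "A k j'"] u[of j] A2[of k j'] by argo
  have "\<bar>\<Sum>j\<in>UNIV. u j * A i j\<bar> \<le> 3 * ((R + D^2) / 2)"
    using abs_sum_UNIV_le[of "\<lambda>j. u j * A i j", OF uA] by simp
  moreover have "\<bar>q * u i * (\<Sum>j\<in>UNIV. A j j)\<bar> \<le> \<bar>u i * (\<Sum>j\<in>UNIV. A j j)\<bar>"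
    using abs_mult_le_of_abs_le_1[OF q, of "u i * (\<Sum>j\<in>UNIV. A j j)"] by (simp add: mult.assoc)
  moreover have "\<bar>u i * (\<Sum>j\<in>UNIV. A j j)\<bar> \<le> 3 * ((R + D^2) / 2)"
    using abs_sum_UNIV_le[of "\<lambda>j. u i * A j j", OF uA] by (simp add: sum_distrib_left)
  ultimately show ?thesis by argo
qed

lemma abs_density_gradient_terms_le:
  fixes u l :: "3 \<Rightarrow> real"
  assumes u: "\<And>j. (u j)^2 \<le> R" and n2: "0 \<le> n2" "n2 \<le> R"
    and c: "\<bar>c\<^sub>1\<bar> \<le> 1" "\<bar>c\<^sub>2\<bar> \<le> 1"
  shows "\<bar>c\<^sub>1 * n2 * l i + c\<^sub>2 * u i * (\<Sum>j\<in>UNIV. u j * l j)\<bar> \<le> 2 * R + 2 * R * (\<Sum>j\<in>UNIV. (l j)^2)"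
proof -
  define L2 where "L2 = (\<Sum>j\<in>UNIV. (l j)^2)"
  have l: "\<bar>l j\<bar> \<le> (1 + L2) / 2" for j
    using abs_mult_le_half_sum_squares[of 1 "l j"] member_le_sum[of j UNIV "\<lambda>j. (l j)^2"]
    by (simp add: L2_def)
  have "\<bar>c\<^sub>1 * n2 * l i\<bar> \<le> n2 * \<bar>l i\<bar>"
    using abs_mult_le_of_abs_le_1[OF c(1), of "n2 * l i"] n2 by (simp add: abs_mult mult.assoc)
  also have "\<dots> \<le> R * ((1 + L2) / 2)"
    using l[of i] n2 by (intro mult_mono) auto
  finally have first: "\<bar>c\<^sub>1 * n2 * l i\<bar> \<le> R * ((1 + L2) / 2)" .
  have uu: "\<bar>u i * u j\<bar> \<le> R" for j
    using abs_mult_le_half_sum_squares[of "u i" "u j"] u[of i] u[of j] by argo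
  have uul: "\<bar>u i * u j * l j\<bar> \<le> R * ((1 + L2) / 2)" for j
    using mult_mono[OF uu l order_trans[OF abs_ge_zero uu] abs_ge_zero] by (simp add: abs_mult)
  have "\<bar>c\<^sub>2 * u i * (\<Sum>j\<in>UNIV. u j * l j)\<bar> \<le> \<bar>u i * (\<Sum>j\<in>UNIV. u j * l j)\<bar>"
    using abs_mult_le_of_abs_le_1[OF c(2), of "u i * (\<Sum>j\<in>UNIV. u j * l j)"] by (simp add: mult.assoc)
  also have "\<dots> \<le> 3 * (R * ((1 + L2) / 2))"
    using abs_sum_UNIV_le[of "\<lambda>j. u i * u j * l j", OF uul] by (simp add: sum_distrib_left mult.assoc)
  finally have second: "\<bar>c\<^sub>2 * u i * (\<Sum>j\<in>UNIV. u j * l j)\<bar> \<le> 3 * (R * ((1 + L2) / 2))" .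
  have "R * ((1 + L2) / 2) + 3 * (R * ((1 + L2) / 2)) = 2 * R + 2 * R * L2"
    by (simp add: field_simps)
  with first second show ?thesis
    unfolding L2_def[symmetric] by argo
qed

lemma abs_euler_gradient_terms_le:
  fixes u l :: "3 \<Rightarrow> real" and A :: "3 \<Rightarrow> 3 \<Rightarrow> real"
  assumes K: "0 \<le> K" "K \<le> 1/3"
    and n2: "n2 = (\<Sum>j\<in>UNIV. (u j)^2)" "n2 \<le> 1" "n2 \<le> R"
    and A: "\<And>i j. \<bar>A i j\<bar> \<le> D"
    and Q: "Q = (1 - K) / (1 - K * n2)"
  shows "\<bar>K / (1 + K) * n2 * l i - (\<Sum>j\<in>UNIV. u j * A i j)
          + (1 - Q) * u i * (\<Sum>j\<in>UNIV. A j j)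
          + (1 - K) / (1 + K) * (1 - Q) * u i * (\<Sum>j\<in>UNIV. u j * l j)\<bar>
        \<le> 5 * R + 2 * R * (\<Sum>j\<in>UNIV. (l j)^2) + 3 * D^2"
proof -
  have u: "(u j)^2 \<le> R" for j
    using member_le_sum[of j UNIV "\<lambda>j. (u j)^2"] n2 by simp
  have n2_nonneg: "0 \<le> n2" using n2(1) by (simp add: sum_nonneg)
  have Q: "\<bar>1 - Q\<bar> \<le> 1"
    using euler_pressure_factor_bounds[OF K n2_nonneg n2(2)] Q by simp
  have "\<bar>(1 - K) / (1 + K)\<bar> \<le> 1" using K by simp
  with Q have "\<bar>K / (1 + K)\<bar> \<le> 1" and "\<bar>(1 - K) / (1 + K) * (1 - Q)\<bar> \<le> 1"
    using K mult_mono[of "\<bar>(1 - K) / (1 + K)\<bar>" 1 "\<bar>1 - Q\<bar>" 1] by (simp_all add: abs_mult)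
  from abs_density_gradient_terms_le[where u = u and l = l and i = i, OF u n2_nonneg n2(3) this]
    abs_velocity_gradient_terms_le[where u = u and A = A and i = i, OF u A Q]
  show ?thesis by argo
qed

(* The linear part of the pressure gradient is removed because its mean over the torus
  vanishes; what remains is at least quadratic. *)
definition euler_rhs_v_nonlinear ::
  "real \<Rightarrow> real \<Rightarrow> real \<Rightarrow> (real^3 \<Rightarrow> real^3) \<Rightarrow> (real^3 \<Rightarrow> real) \<Rightarrow> real^3 \<Rightarrow> 3 \<Rightarrow> real" where
  "euler_rhs_v_nonlinear \<alpha> K t w l x i =
     euler_rhs_v \<alpha> K t w l x i + \<alpha> * (1 - 3*K) / t * w x $ i + K / (1 + K) * t powr (-\<alpha>) * pdx i l x"

lemma euler_rhs_v_nonlinear_eq: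
  assumes n2: "n2 = (norm (w x))^2" and Q: "Q = (1 - K) / (1 - K * n2)"
  shows "euler_rhs_v_nonlinear \<alpha> K t w l x i =
    t powr (-\<alpha>) * (K / (1 + K) * n2 * pdx i l x - (\<Sum>j\<in>UNIV. w x $ j * pdx j (\<lambda>y. w y $ i) x)
      + (1 - Q) * w x $ i * (\<Sum>j\<in>UNIV. pdx j (\<lambda>y. w y $ j) x)
      + (1 - K) / (1 + K) * (1 - Q) * w x $ i * (\<Sum>j\<in>UNIV. w x $ j * pdx j l x))
    + \<alpha> * (1 - 3*K) * (1 / t) * Q * n2 * w x $ i"
  unfolding euler_rhs_v_nonlinear_def euler_rhs_v_def Let_def n2[symmetric] Q[symmetric]
  by (simp add: add_divide_distrib diff_divide_distrib algebra_simps)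

lemma abs_euler_rhs_v_nonlinear_le:
  assumes K: "0 \<le> K" "K \<le> 1/3" and \<alpha>: "0 \<le> \<alpha>" and t: "0 < t"
    and w: "norm (w x) \<le> 1" "(norm (w x))^2 \<le> R"
    and Dw: "\<And>i j. \<bar>pdx j (\<lambda>y. w y $ i) x\<bar> \<le> D"
  shows "\<bar>euler_rhs_v_nonlinear \<alpha> K t w l x i\<bar> \<le> (1 + t powr (1 - \<alpha>)) / t *
    ((5 + \<alpha> * (1 - 3*K)) * R + 2 * R * (\<Sum>j\<in>UNIV. (pdx j l x)^2) + 3 * D^2)"
proof -
  define n2 where "n2 = (norm (w x))^2"
  define Q where "Q = (1 - K) / (1 - K * n2)"
  define a where "a = \<alpha> * (1 - 3*K)"
  define B where "B = 5 * R + 2 * R * (\<Sum>j\<in>UNIV. (pdx j l x)^2) + 3 * D^2"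
  have n2: "n2 = (\<Sum>j\<in>UNIV. (w x $ j)^2)" "0 \<le> n2" "n2 \<le> 1" "n2 \<le> R"
    using w by (simp_all add: n2_def power2_norm_vec[symmetric] power_le_one)
  have Q: "0 \<le> Q" "Q \<le> 1"
    using euler_pressure_factor_bounds[OF K n2(2,3)] by (simp_all add: Q_def)
  have a: "0 \<le> a" using K \<alpha> by (simp add: a_def)
  have W: "(1 + t powr (1 - \<alpha>)) / t = 1 / t + t powr (-\<alpha>)"
    using t by (simp add: powr_diff powr_minus field_simps)
  have gradient_terms: "\<bar>K / (1 + K) * n2 * pdx i l x - (\<Sum>j\<in>UNIV. w x $ j * pdx j (\<lambda>y. w y $ i) x)
      + (1 - Q) * w x $ i * (\<Sum>j\<in>UNIV. pdx j (\<lambda>y. w y $ j) x)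
      + (1 - K) / (1 + K) * (1 - Q) * w x $ i * (\<Sum>j\<in>UNIV. w x $ j * pdx j l x)\<bar> \<le> B"
    (is "\<bar>?T\<bar> \<le> B")
    unfolding B_def by (rule abs_euler_gradient_terms_le[OF K n2(1,3,4) Dw Q_def])
  have "\<bar>w x $ i\<bar> \<le> 1"
    using component_le_norm_cart[of "w x" i] w by simp
  then have "Q * (n2 * \<bar>w x $ i\<bar>) \<le> 1 * (R * 1)"
    using Q n2 by (intro mult_mono) auto
  then have friction: "\<bar>a * (1 / t) * Q * n2 * w x $ i\<bar> \<le> (1 / t) * (a * R)"
    using mult_left_mono[of _ _ "a / t"] a t Q n2 by (simp add: abs_mult mult.assoc)
  have "0 \<le> B"
    using gradient_terms by linarith
  have "\<bar>t powr (-\<alpha>) * ?T\<bar> \<le> t powr (-\<alpha>) * B"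
    using gradient_terms by (simp add: abs_mult mult_left_mono)
  from order_trans[OF abs_triangle_ineq add_mono[OF this friction]]
  have "\<bar>euler_rhs_v_nonlinear \<alpha> K t w l x i\<bar> \<le> t powr (-\<alpha>) * B + (1 / t) * (a * R)"
    unfolding euler_rhs_v_nonlinear_eq[where w = w and x = x, OF n2_def Q_def] a_def[symmetric] .
  also have "\<dots> \<le> (1 / t + t powr (-\<alpha>)) * (a * R + B)"
    using \<open>0 \<le> B\<close> a n2 t by (simp add: algebra_simps add_mono mult_left_mono)
  finally show ?thesis
    unfolding W a_def[symmetric] B_def by (simp add: algebra_simps)
qed

section \<open>The mean velocity of a solution\<close>

locale euler_flow =
  fixes \<alpha> K t0 t1 :: real
    and v :: "real \<Rightarrow> real^3 \<Rightarrow> real^3" and L :: "real \<Rightarrow> real^3 \<Rightarrow> real"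
  assumes alpha_pos: "0 < \<alpha>" and K_nonneg: "0 \<le> K" and K_le: "K \<le> 1/3"
    and t0_ge_1: "1 \<le> t0" and solution: "euler_solution \<alpha> K t0 t1 v L"
begin

lemma v_Ck: "Ck_on 2 ({t0<..<t1} \<times> UNIV) (\<lambda>p. v (fst p) (snd p) $ i)"
  and L_Ck: "Ck_on 2 ({t0<..<t1} \<times> UNIV) (\<lambda>p. L (fst p) (snd p))"
  and L_periodic: "t \<in> {t0<..<t1} \<Longrightarrow> periodic3 (L t)"
  and v_small: "t \<in> {t0<..<t1} \<Longrightarrow> norm (v t x) < 1/10"
  and v_equation: "t \<in> {t0<..<t1} \<Longrightarrow>
    vector_derivative (\<lambda>s. v s x $ i) (at t) = euler_rhs_v \<alpha> K t (v t) (L t) x i"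
  using solution unfolding euler_solution_def by blast+

lemma v_slice_Ck: "t \<in> {t0<..<t1} \<Longrightarrow> Ck_on 2 UNIV (\<lambda>x. v t x $ i)"
  using Ck_on_slice[OF v_Ck] by simp

lemma L_slice_Ck: "t \<in> {t0<..<t1} \<Longrightarrow> Ck_on 2 UNIV (L t)"
  using Ck_on_slice[OF L_Ck] by simp

lemma v_differentiable:
  "s \<in> {t0<..<t1} \<Longrightarrow> (\<lambda>p. v (fst p) (snd p) $ i) differentiable (at (s, x))"
  using v_Ck[of i] by (simp add: numeral_2_eq_2)

lemma euler_rhs_v_eq_time_partial:
  assumes "s \<in> {t0<..<t1}"
  shows "euler_rhs_v \<alpha> K s (v s) (L s) x i
    = frechet_derivative (\<lambda>p. v (fst p) (snd p) $ i) (at (s, x)) (1, 0)"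
proof -
  from has_field_derivative_first_slice[OF v_differentiable[OF assms]]
  have "vector_derivative (\<lambda>s. v s x $ i) (at s)
      = frechet_derivative (\<lambda>p. v (fst p) (snd p) $ i) (at (s, x)) (1, 0)"
    by (intro vector_derivative_at) (simp add: has_real_derivative_iff_has_vector_derivative)
  then show ?thesis using v_equation[OF assms] by simp
qed

lemma has_field_derivative_v:
  assumes "s \<in> {t0<..<t1}"
  shows "((\<lambda>s. v s x $ i) has_field_derivative euler_rhs_v \<alpha> K s (v s) (L s) x i) (at s)"
  using has_field_derivative_first_slice[OF v_differentiable[OF assms]]
  by (simp add: euler_rhs_v_eq_time_partial[OF assms])

lemma continuous_on_euler_rhs_v:
  "continuous_on ({t0<..<t1} \<times> UNIV) (\<lambda>(s, x). euler_rhs_v \<alpha> K s (v s) (L s) x i)"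
proof -
  have "continuous_on ({t0<..<t1} \<times> UNIV)
      (\<lambda>p. frechet_derivative (\<lambda>p. v (fst p) (snd p) $ i) (at p) (1, 0))"
    using v_Ck[of i] by (simp add: numeral_2_eq_2 Basis_prod_def)
  then show ?thesis
    by (rule continuous_on_cong[THEN iffD1, rotated 2])
      (auto simp: euler_rhs_v_eq_time_partial)
qed

lemma continuous_on_euler_rhs_v_slice:
  "t \<in> {t0<..<t1} \<Longrightarrow> continuous_on UNIV (\<lambda>x. euler_rhs_v \<alpha> K t (v t) (L t) x i)"
  using continuous_on_slice[OF continuous_on_euler_rhs_v] by simp

lemma mean3_v_component:
  "s \<in> {t0<..<t1} \<Longrightarrow> mean3 (v s) $ i = integral torus_cell (\<lambda>x. v s x $ i)"
  using mean3_component Ck_on_imp_continuous_on[OF v_slice_Ck] by blast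

lemma has_field_derivative_mean3_v_component:
  assumes t: "t \<in> {t0<..<t1}"
  shows "((\<lambda>s. mean3 (v s) $ i) has_field_derivative
    integral torus_cell (\<lambda>x. euler_rhs_v \<alpha> K t (v t) (L t) x i)) (at t)"
proof -
  have "((\<lambda>s. integral torus_cell (\<lambda>x. v s x $ i)) has_field_derivative
      integral torus_cell (\<lambda>x. euler_rhs_v \<alpha> K t (v t) (L t) x i)) (at t within {t0<..<t1})"
    unfolding torus_cell_def
  proof (rule leibniz_rule_field_derivative)
    show "((\<lambda>s. v s x $ i) has_field_derivative euler_rhs_v \<alpha> K s (v s) (L s) x i) (at s within {t0<..<t1})"
      if "s \<in> {t0<..<t1}" for s x
      using has_field_derivative_v[OF that] by (rule has_field_derivative_at_within)
    show "(\<lambda>x. v s x $ i) integrable_on cbox 0 One" if "s \<in> {t0<..<t1}" for s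
      using integrable_on_torus_cell[OF Ck_on_imp_continuous_on[OF v_slice_Ck[OF that]]]
      by (simp add: torus_cell_def)
    show "continuous_on ({t0<..<t1} \<times> cbox 0 One) (\<lambda>(s, x). euler_rhs_v \<alpha> K s (v s) (L s) x i)"
      using continuous_on_euler_rhs_v by (rule continuous_on_subset) auto
  qed (use t in auto)
  then have "((\<lambda>s. integral torus_cell (\<lambda>x. v s x $ i)) has_field_derivative
      integral torus_cell (\<lambda>x. euler_rhs_v \<alpha> K t (v t) (L t) x i)) (at t)"
    using at_within_open[OF t] by simp
  then show ?thesis
    by (rule has_field_derivative_transform_within_open[OF _ _ t]) (simp_all add: mean3_v_component)
qed

lemma mean3_has_vector_derivative:
  assumes t: "t \<in> {t0<..<t1}"
  shows "((\<lambda>s. mean3 (v s)) has_vector_derivative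
    (\<chi> i. integral torus_cell (\<lambda>x. euler_rhs_v \<alpha> K t (v t) (L t) x i))) (at t)"
  using has_field_derivative_mean3_v_component[OF t]
  by (intro has_vector_derivative_componentwise_cart) simp

lemma integral_euler_rhs_v:
  assumes t: "t \<in> {t0<..<t1}"
  shows "integral torus_cell (\<lambda>x. euler_rhs_v \<alpha> K t (v t) (L t) x i)
    = integral torus_cell (\<lambda>x. euler_rhs_v_nonlinear \<alpha> K t (v t) (L t) x i)
      - \<alpha> * (1 - 3*K) / t * mean3 (v t) $ i"
proof -
  have "((\<lambda>x. euler_rhs_v_nonlinear \<alpha> K t (v t) (L t) x i) has_integral
      integral torus_cell (\<lambda>x. euler_rhs_v \<alpha> K t (v t) (L t) x i)
      + \<alpha> * (1 - 3*K) / t * integral torus_cell (\<lambda>x. v t x $ i)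
      + K / (1 + K) * t powr (-\<alpha>) * integral torus_cell (pdx i (L t))) torus_cell"
    unfolding euler_rhs_v_nonlinear_def
    using continuous_on_euler_rhs_v_slice[OF t] Ck_on_imp_continuous_on[OF v_slice_Ck[OF t]]
      Ck_on_Suc_UNIV_continuous_pdx[OF L_slice_Ck[OF t, unfolded numeral_2_eq_2]]
    by (intro has_integral_add has_integral_mult_right integrable_integral integrable_on_torus_cell)
  moreover have "integral torus_cell (pdx i (L t)) = 0"
    using L_slice_Ck[OF t, unfolded numeral_2_eq_2] L_periodic[OF t]
    by (rule integral_torus_cell_pdx_periodic)
  moreover note mean3_v_component[OF t, of i]
  ultimately show ?thesis
    by (simp add: integral_unique)
qed

lemma abs_euler_rhs_v_nonlinear_le_on_cell:
  assumes t: "t \<in> {t0<..<t1}" and x: "x \<in> torus_cell"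
  shows "\<bar>euler_rhs_v_nonlinear \<alpha> K t (v t) (L t) x i\<bar> \<le> (1 + t powr (1 - \<alpha>)) / t *
    ((5 + \<alpha> * (1 - 3*K)) * velocity_sq_bound (v t)
      + 2 * velocity_sq_bound (v t) * (\<Sum>j\<in>UNIV. (pdx j (L t) x)^2) + 3 * (Dv_Linf (v t))^2)"
proof (rule abs_euler_rhs_v_nonlinear_le)
  show "0 \<le> K" "K \<le> 1/3" "0 \<le> \<alpha>" "0 < t"
    using K_nonneg K_le alpha_pos t t0_ge_1 by auto
  show "norm (v t x) \<le> 1"
    using v_small[OF t, of x] by simp
  note v = v_slice_Ck[OF t, unfolded numeral_2_eq_2]
  show "(norm (v t x))^2 \<le> velocity_sq_bound (v t)"
    using v x by (rule norm_sq_le_velocity_sq_bound)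
  show "\<bar>pdx j (\<lambda>y. v t y $ i) x\<bar> \<le> Dv_Linf (v t)" for i j
    using v x by (rule abs_pdx_le_Dv_Linf)
qed

lemma abs_integral_euler_rhs_v_nonlinear_le:
  assumes t: "t \<in> {t0<..<t1}"
  shows "\<bar>integral torus_cell (\<lambda>x. euler_rhs_v_nonlinear \<alpha> K t (v t) (L t) x i)\<bar>
    \<le> (1 + t powr (1 - \<alpha>)) / t * mean_velocity_poly (\<alpha> * (1 - 3*K))
        (\<lambda>k. [mean3 (v t) $ 1, mean3 (v t) $ 2, mean3 (v t) $ 3,
              Dv_H1 (v t), Dv_Linf (v t), DL_L2 (L t)] ! k)"
proof -
  define W where "W = (1 + t powr (1 - \<alpha>)) / t"
  define D where "D = Dv_Linf (v t)"
  define R where "R = velocity_sq_bound (v t)"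
  define G where "G x = (\<Sum>j\<in>UNIV. (pdx j (L t) x)^2)" for x
  note v = v_slice_Ck[OF t, unfolded numeral_2_eq_2]
  note L = L_slice_Ck[OF t, unfolded numeral_2_eq_2]
  have pointwise: "\<bar>euler_rhs_v_nonlinear \<alpha> K t (v t) (L t) x i\<bar>
      \<le> W * ((5 + \<alpha> * (1 - 3*K)) * R + 3 * D^2) + W * (2 * R) * G x" if "x \<in> torus_cell" for x
    using abs_euler_rhs_v_nonlinear_le_on_cell[OF t that, of i]
    by (simp add: W_def D_def R_def G_def algebra_simps)
  have G: "(G has_integral (DL_L2 (L t))^2) torus_cell"
    unfolding DL_L2_sq[OF L] G_def using Ck_on_Suc_UNIV_continuous_pdx[OF L]
    by (intro integrable_integral integrable_on_torus_cell continuous_intros)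
  have bound: "((\<lambda>x. W * ((5 + \<alpha> * (1 - 3*K)) * R + 3 * D^2) + W * (2 * R) * G x) has_integral
      W * ((5 + \<alpha> * (1 - 3*K)) * R + 3 * D^2) + W * (2 * R) * (DL_L2 (L t))^2) torus_cell"
    by (intro has_integral_add has_integral_mult_right has_integral_torus_cell_const G)
  have E: "(\<lambda>x. euler_rhs_v_nonlinear \<alpha> K t (v t) (L t) x i) integrable_on torus_cell"
    unfolding euler_rhs_v_nonlinear_def
    using continuous_on_euler_rhs_v_slice[OF t] Ck_on_imp_continuous_on[OF v]
      Ck_on_Suc_UNIV_continuous_pdx[OF L]
    by (intro integrable_on_torus_cell continuous_on_add continuous_on_mult_left)
  have "\<bar>integral torus_cell (\<lambda>x. euler_rhs_v_nonlinear \<alpha> K t (v t) (L t) x i)\<bar>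
      \<le> W * ((5 + \<alpha> * (1 - 3*K)) * R + 3 * D^2) + W * (2 * R) * (DL_L2 (L t))^2"
    using integral_norm_bound_integral[OF E has_integral_integrable[OF bound]] pointwise
      integral_unique[OF bound] by simp
  then show ?thesis
    by (simp add: mean_velocity_poly_def W_def R_def D_def velocity_sq_bound_def
        power2_norm_vec sum_3 algebra_simps)
qed

lemma mean_velocity_estimate:
  assumes t: "t \<in> {t0<..<t1}"
  shows "(\<lambda>s. mean3 (v s)) differentiable (at t) \<and>
    norm (vector_derivative (\<lambda>s. mean3 (v s)) (at t) + (\<alpha> * (1 - 3*K) / t) *\<^sub>R mean3 (v t))
      \<le> 3 * (1 + t powr (1 - \<alpha>)) / t * mean_velocity_poly (\<alpha> * (1 - 3*K))
          (\<lambda>k. [mean3 (v t) $ 1, mean3 (v t) $ 2, mean3 (v t) $ 3,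
                Dv_H1 (v t), Dv_Linf (v t), DL_L2 (L t)] ! k)"
    (is "_ \<and> norm ?M \<le> 3 * (1 + t powr (1 - \<alpha>)) / t * ?P")
proof
  note deriv = mean3_has_vector_derivative[OF t]
  show "(\<lambda>s. mean3 (v s)) differentiable (at t)"
    using deriv by (auto simp: has_vector_derivative_def intro: differentiableI)
  have "?M $ i = integral torus_cell (\<lambda>x. euler_rhs_v_nonlinear \<alpha> K t (v t) (L t) x i)" for i
    by (simp add: vector_derivative_at[OF deriv] integral_euler_rhs_v[OF t])
  then have "\<bar>?M $ i\<bar> \<le> (1 + t powr (1 - \<alpha>)) / t * ?P" for i
    using abs_integral_euler_rhs_v_nonlinear_le[OF t] by simp
  then have "(\<Sum>i\<in>UNIV. \<bar>?M $ i\<bar>) \<le> real CARD(3) * ((1 + t powr (1 - \<alpha>)) / t * ?P)"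
    by (intro sum_bounded_above)
  then have "norm ?M \<le> 3 * ((1 + t powr (1 - \<alpha>)) / t * ?P)"
    using norm_le_l1_cart[of ?M] by simp
  also have "\<dots> = 3 * (1 + t powr (1 - \<alpha>)) / t * ?P"
    by simp
  finally show "norm ?M \<le> 3 * (1 + t powr (1 - \<alpha>)) / t * ?P" .
qed

end


theorem lemma4p1:
  fixes \<alpha> K :: real
  assumes "\<alpha> > 0" and "0 \<le> K" and "K \<le> 1/3"
  shows "\<exists>C p. poly_deg_ge2 6 p \<and>
    (\<forall>t0 t1 v L. 1 \<le> t0 \<longrightarrow> t0 < t1 \<longrightarrow> euler_solution \<alpha> K t0 t1 v L \<longrightarrow>
      (\<forall>t\<in>{t0<..<t1}.
         (\<lambda>s. mean3 (v s)) differentiable (at t) \<and>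
         norm (vector_derivative (\<lambda>s. mean3 (v s)) (at t)
               + (\<alpha> * (1 - 3*K) / t) *\<^sub>R mean3 (v t))
           \<le> C * (1 + t powr (1 - \<alpha>)) / t *
              p (\<lambda>k. [mean3 (v t) $ 1, mean3 (v t) $ 2, mean3 (v t) $ 3,
                       Dv_H1 (v t), Dv_Linf (v t), DL_L2 (L t)] ! k)))"
proof (intro exI[of _ 3] exI[of _ "mean_velocity_poly (\<alpha> * (1 - 3*K))"] conjI allI impI ballI)
  show "poly_deg_ge2 6 (mean_velocity_poly (\<alpha> * (1 - 3*K)))"
    by (rule poly_deg_ge2_mean_velocity_poly)
next
  fix t0 t1 v L t
  assume "1 \<le> t0" and "euler_solution \<alpha> K t0 t1 v L" and t: "t \<in> {t0<..<t1}"
  with assms interpret euler_flow \<alpha> K t0 t1 v L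
    by unfold_locales
  from mean_velocity_estimate[OF t] show "(\<lambda>s. mean3 (v s)) differentiable (at t)"
    and "norm (vector_derivative (\<lambda>s. mean3 (v s)) (at t) + (\<alpha> * (1 - 3*K) / t) *\<^sub>R mean3 (v t))
      \<le> 3 * (1 + t powr (1 - \<alpha>)) / t * mean_velocity_poly (\<alpha> * (1 - 3*K))
          (\<lambda>k. [mean3 (v t) $ 1, mean3 (v t) $ 2, mean3 (v t) $ 3,
                Dv_H1 (v t), Dv_Linf (v t), DL_L2 (L t)] ! k)"
    by auto
qed

end
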